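(* Let $A$ be the upper triangular $N\times N$ complex matrix with entries $A_{ii}=\lambda_i(\lambda_i-1)$, $A_{ij}=-2\lambda_i$ for $i<j$, and $A_{ij}=0$ for $i>j$. Then for every $m\geq0$ and every $i\in\{1,\dots,N\}$, $$C^{(2m+1)}_{ii}\cdot v=\Big(\sum_{j=1}^N (A^m)_{ij}\,\lambda_j\Big)\, v.$$
   Context: Let $N\geq1$, $I=\{-N,\dots,-1,1,\dots,N\}$, and for $k\in I$ put $\bar k=0$ if $k>0$, $\bar k=1$ if $k<0$. The Lie superalgebra $\mathfrak{q}(N)$ over $\mathbb{C}$ is spanned by elements $F_{ij}$ ($i,j\in I$) with $F_{-i,-j}=F_{ij}$ (realized as $F_{ij}=E_{ij}+E_{-i,-j}\in\mathfrak{gl}(N|N)$), $F_{ij}$ of parity $\bar\imath+\bar\jmath\bmod 2$, and supercommutator $$[F_{ij}, F_{kl}] = \delta_{kj} F_{il} - (-1)^{(\bar{\imath}+ \bar{\jmath})(\bar{k} + \bar{l})} \delta_{il} F_{kj} + \delta_{k,-j} F_{-i,l} - (-1)^{(\bar{\imath} + \bar{\jmath})(\bar{k} + \bar{l})} \delta_{-i,l} F_{k,-j}.$$ For $n\geq1$ define $C^{(n)}_{ij}\in U(\mathfrak{q}(N))$ by $$C^{(n)}_{ij} = \sum_{k_1,\ldots,k_{n-1}\in I}F_{ik_1} (-1)^{\bar{k}_1} F_{k_1k_2} (-1)^{\bar{k}_2} \cdots F_{k_{n-2}k_{n-1}} (-1)^{\bar{k}_{n-1}} F_{k_{n-1}j}$$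 (so $C^{(1)}_{ij}=F_{ij}$). Let $V$ be a representation of $\mathfrak{q}(N)$ and $v\in V$ a vector such that $F_{ij}\cdot v=0$ whenever $|i|<|j|$, and $F_{ii}\cdot v=\lambda_i v$ for $i=1,\dots,N$, where $\lambda_1,\dots,\lambda_N\in\mathbb{C}$. *)

theory Defs
  imports Main "HOL.Complex" "Jordan_Normal_Form.Matrix"
begin

definition qI :: "nat \<Rightarrow> int set" where
  "qI N = {- int N .. -1} \<union> {1 .. int N}"

definition pbar :: "int \<Rightarrow> nat" where
  "pbar k = (if k < 0 then 1 else 0)"

definition sgnI :: "int \<Rightarrow> complex" where
  "sgnI k = (-1) ^ pbar k"

text \<open>rho i j is the operator by which F_ij acts on V (a complex vector space,
  given as an abelian group with scalar multiplication smul).\<close>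
definition is_qN_rep ::
  "nat \<Rightarrow> (complex \<Rightarrow> 'v::ab_group_add \<Rightarrow> 'v) \<Rightarrow> (int \<Rightarrow> int \<Rightarrow> 'v \<Rightarrow> 'v) \<Rightarrow> bool" where
  "is_qN_rep N smul rho \<longleftrightarrow>
     vector_space smul \<and>
     (\<forall>i\<in>qI N. \<forall>j\<in>qI N. Vector_Spaces.linear smul smul (rho i j)) \<and>
     (\<forall>i\<in>qI N. \<forall>j\<in>qI N. rho (-i) (-j) = rho i j) \<and>
     (\<forall>i\<in>qI N. \<forall>j\<in>qI N. \<forall>k\<in>qI N. \<forall>l\<in>qI N. \<forall>w.
        let s = ((-1::complex) ^ ((pbar i + pbar j) * (pbar k + pbar l))) in
        rho i j (rho k l w) - smul s (rho k l (rho i j w)) =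
          (if k = j then rho i l w else 0)
          - smul s (if i = l then rho k j w else 0)
          + (if k = - j then rho (- i) l w else 0)
          - smul s (if - i = l then rho k (- j) w else 0))"

fun Cact ::
  "nat \<Rightarrow> (complex \<Rightarrow> 'v::ab_group_add \<Rightarrow> 'v) \<Rightarrow> (int \<Rightarrow> int \<Rightarrow> 'v \<Rightarrow> 'v)
     \<Rightarrow> nat \<Rightarrow> int \<Rightarrow> int \<Rightarrow> 'v \<Rightarrow> 'v" where
  "Cact N smul rho 0 i j w = 0"
| "Cact N smul rho (Suc 0) i j w = rho i j w"
| "Cact N smul rho (Suc (Suc n)) i j w =
     (\<Sum>k\<in>qI N. rho i k (smul (sgnI k) (Cact N smul rho (Suc n) k j w)))"

text \<open>The upper triangular N x N matrix A (0-based JNF indices: entry (i-1,j-1)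
  of the matrix is A_{ij} of the paper).\<close>
definition Amat :: "nat \<Rightarrow> (int \<Rightarrow> complex) \<Rightarrow> complex mat" where
  "Amat N lam = mat N N (\<lambda>(a, b).
      let i = int a + 1; j = int b + 1 in
      if i = j then lam i * (lam i - 1) else if i < j then -2 * lam i else 0)"

end

theory Submission
  imports Defs
begin

text \<open>The operators C^(n)_kl have the same supercommutators with every F_ij as F_kl has,
  since C^(n+1)_kl = sum_m F_km (-1)^(bar m) C^(n)_ml and the extra terms of the Leibniz rule
  cancel in the sum over m.  Together with the highest weight conditions this gives
  C^(n)_kl v = 0 for |k| < |l|, and expanding C^(n+2)_ll v and C^(n+2)_{l,-l} v from the
  right and commuting each F_pl to the left expresses them through the values of
  C^(n+1)_pp v and C^(n+1)_{p,-p} v with p \<ge> l.  Since C^(n)_{-i,-j} = (-1)^(n-1) C^(n)_ij,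
  the levels alternate: C^(2m+1)_ll v = \<lambda>_l b_m(l) v and C^(2m+1)_{l,-l} v = b_m(l) F_{-l,l} v,
  while C^(2m+2)_ll v = b_(m+1)(l) v and C^(2m+2)_{l,-l} v = 0, where
  b_(m+1)(l) = \<lambda>_l (\<lambda>_l - 1) b_m(l) - 2 sum_(p>l) \<lambda>_p b_m(p).  This is exactly the recursion
  satisfied by the entries (A^m \<lambda>)_l = \<lambda>_l b_m(l).\<close>

definition super_sign :: "int \<Rightarrow> int \<Rightarrow> int \<Rightarrow> int \<Rightarrow> complex" where
  "super_sign i j k l = (-1) ^ ((pbar i + pbar j) * (pbar k + pbar l))"

lemma super_sign_mult: "super_sign i j k m * super_sign i j m l = super_sign i j k l"
  unfolding super_sign_def pbar_def by (auto simp: algebra_simps)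

lemma super_sign_square: "super_sign i j k l * super_sign i j k l = 1"
  unfolding super_sign_def pbar_def by auto

lemma sgnI_eq: "sgnI k = (if k < 0 then -1 else 1)"
  by (simp add: sgnI_def pbar_def)

lemma sgnI_super_sign_swap: "sgnI j * super_sign i j k j = sgnI i * super_sign i j k i"
  unfolding super_sign_def sgnI_eq pbar_def by auto

lemma sgnI_super_sign_swap_neg:
  "i \<noteq> 0 \<Longrightarrow> j \<noteq> 0 \<Longrightarrow> sgnI (-j) * super_sign i j k (-j) = sgnI (-i) * super_sign i j k (-i)"
  unfolding super_sign_def sgnI_eq pbar_def by auto

lemma qI_nonzero: "k \<in> qI N \<Longrightarrow> k \<noteq> 0"
  by (auto simp: qI_def)

lemma qI_uminus: "k \<in> qI N \<Longrightarrow> -k \<in> qI N"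
  by (auto simp: qI_def)

lemma finite_qI [simp]: "finite (qI N)"
  by (simp add: qI_def)

lemma int_in_qI:
  assumes "p \<in> {1..N}" shows "int p \<in> qI N" "- int p \<in> qI N"
  using assms by (auto simp: qI_def)

lemma sum_qI: "(\<Sum>k\<in>qI N. f k) = (\<Sum>p\<in>{1..N}. f (int p) + f (- int p))"
proof -
  have qI_eq: "qI N = int ` {1..N} \<union> (\<lambda>p. - int p) ` {1..N}"
  proof (intro equalityI subsetI)
    fix x assume "x \<in> qI N"
    then have "x = int (nat \<bar>x\<bar>) \<and> nat \<bar>x\<bar> \<in> {1..N} \<or> x = - int (nat \<bar>x\<bar>) \<and> nat \<bar>x\<bar> \<in> {1..N}"
      by (auto simp: qI_def)
    then show "x \<in> int ` {1..N} \<union> (\<lambda>p. - int p) ` {1..N}" by blast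
  qed (auto simp: qI_def)
  have "(\<Sum>k\<in>qI N. f k) = (\<Sum>k\<in>int ` {1..N}. f k) + (\<Sum>k\<in>(\<lambda>p. - int p) ` {1..N}. f k)"
    unfolding qI_eq by (rule sum.union_disjoint) auto
  also have "\<dots> = (\<Sum>p\<in>{1..N}. f (int p)) + (\<Sum>p\<in>{1..N}. f (- int p))"
    by (subst sum.reindex, simp add: inj_on_def)+ simp
  finally show ?thesis by (simp add: sum.distrib)
qed

lemma sum_qI_reflect: "(\<Sum>k\<in>qI N. f k) = (\<Sum>k\<in>qI N. f (- k))"
  by (simp add: sum_qI add.commute)

lemma sum_atLeastAtMost_split_at:
  fixes f :: "nat \<Rightarrow> 'a::comm_monoid_add"
  assumes l: "l \<in> {1..N}"
    and f: "\<And>p. p \<in> {1..N} \<Longrightarrow> f p = (if p = l then a else 0) + (if l < p then g p else 0)"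
  shows "(\<Sum>p\<in>{1..N}. f p) = a + (\<Sum>p\<in>{l<..N}. g p)"
proof -
  have "(\<Sum>p\<in>{1..N}. f p) = (\<Sum>p\<in>{1..N}. if p = l then a else 0) + (\<Sum>p\<in>{1..N}. if l < p then g p else 0)"
    using f by (simp add: sum.distrib)
  also have "(\<Sum>p\<in>{1..N}. if l < p then g p else 0) = (\<Sum>p\<in>{p\<in>{1..N}. l < p}. g p)"
    by (simp only: sum.inter_filter[symmetric] finite_atLeastAtMost)
  also have "{p\<in>{1..N}. l < p} = {l<..N}"
    using l by auto
  finally show ?thesis
    using l by simp
qed

locale qN_rep = vector_space smul for smul :: "complex \<Rightarrow> 'v::ab_group_add \<Rightarrow> 'v" +
  fixes N :: nat and rho :: "int \<Rightarrow> int \<Rightarrow> 'v \<Rightarrow> 'v"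
  assumes rho_add: "i \<in> qI N \<Longrightarrow> j \<in> qI N \<Longrightarrow> rho i j (x + y) = rho i j x + rho i j y"
    and rho_scale: "i \<in> qI N \<Longrightarrow> j \<in> qI N \<Longrightarrow> rho i j (smul c x) = smul c (rho i j x)"
    and rho_neg_neg: "i \<in> qI N \<Longrightarrow> j \<in> qI N \<Longrightarrow> rho (-i) (-j) = rho i j"
    and rho_comm: "i \<in> qI N \<Longrightarrow> j \<in> qI N \<Longrightarrow> k \<in> qI N \<Longrightarrow> l \<in> qI N \<Longrightarrow>
      rho i j (rho k l w) - smul (super_sign i j k l) (rho k l (rho i j w)) =
        (if k = j then rho i l w else 0)
        - smul (super_sign i j k l) (if i = l then rho k j w else 0)
        + (if k = - j then rho (- i) l w else 0)
        - smul (super_sign i j k l) (if - i = l then rho k (- j) w else 0)"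
begin

abbreviation C where "C \<equiv> Cact N smul rho"

lemma additive_rho: "i \<in> qI N \<Longrightarrow> j \<in> qI N \<Longrightarrow> additive (rho i j)"
  by standard (rule rho_add)

lemmas rho_zero [simp] = additive.zero[OF additive_rho]
  and rho_diff = additive.diff[OF additive_rho]
  and rho_minus = additive.minus[OF additive_rho]
  and rho_sum = additive.sum[OF additive_rho]

lemma scale_super_sign_twice: "smul (super_sign i j k l) (smul (super_sign i j k l) x) = x"
  using super_sign_square[of i j k l] by simp

definition commutes_like_F :: "(int \<Rightarrow> int \<Rightarrow> 'v \<Rightarrow> 'v) \<Rightarrow> bool" where
  "commutes_like_F G \<longleftrightarrow> (\<forall>i\<in>qI N. \<forall>j\<in>qI N. \<forall>k\<in>qI N. \<forall>l\<in>qI N. \<forall>w.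
     rho i j (G k l w) - smul (super_sign i j k l) (G k l (rho i j w)) =
       (if k = j then G i l w else 0)
       - smul (super_sign i j k l) (if i = l then G k j w else 0)
       + (if k = - j then G (- i) l w else 0)
       - smul (super_sign i j k l) (if - i = l then G k (- j) w else 0))"

lemma commutes_like_FD:
  "commutes_like_F G \<Longrightarrow> i \<in> qI N \<Longrightarrow> j \<in> qI N \<Longrightarrow> k \<in> qI N \<Longrightarrow> l \<in> qI N \<Longrightarrow>
    rho i j (G k l w) - smul (super_sign i j k l) (G k l (rho i j w)) =
       (if k = j then G i l w else 0)
       - smul (super_sign i j k l) (if i = l then G k j w else 0)
       + (if k = - j then G (- i) l w else 0)
       - smul (super_sign i j k l) (if - i = l then G k (- j) w else 0)"
  unfolding commutes_like_F_def by blast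

lemma commutes_like_F_rho: "commutes_like_F rho"
  unfolding commutes_like_F_def using rho_comm by blast

definition contract :: "(int \<Rightarrow> int \<Rightarrow> 'v \<Rightarrow> 'v) \<Rightarrow> int \<Rightarrow> int \<Rightarrow> 'v \<Rightarrow> 'v" where
  "contract G k l w = (\<Sum>m\<in>qI N. rho k m (smul (sgnI m) (G m l w)))"

lemma C_Suc_Suc: "C (Suc (Suc n)) = contract (C (Suc n))"
  by (intro ext) (simp add: contract_def)

text \<open>The Leibniz rule for one summand of contract G; the terms X and Y cancel
  once summed over m.\<close>

lemma commutes_like_F_contract_summand:
  fixes w :: 'v
  assumes G: "commutes_like_F G"
    and i: "i \<in> qI N" and j: "j \<in> qI N" and k: "k \<in> qI N" and l: "l \<in> qI N" and m: "m \<in> qI N"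
  defines "\<sigma> \<equiv> super_sign i j k l"
    and "x \<equiv> smul (sgnI m) (G m l w)"
    and "X \<equiv> smul (sgnI i * super_sign i j k i) (rho k j (G i l w))"
    and "Y \<equiv> smul (sgnI (-i) * super_sign i j k (-i)) (rho k (-j) (G (-i) l w))"
  shows "rho i j (rho k m x) - smul \<sigma> (rho k m (smul (sgnI m) (G m l (rho i j w)))) =
     (if k = j then rho i m x else 0) + (if k = -j then rho (-i) m x else 0)
     - (if i = l then smul \<sigma> (rho k m (smul (sgnI m) (G m j w))) else 0)
     - (if -i = l then smul \<sigma> (rho k m (smul (sgnI m) (G m (-j) w))) else 0)
     + ((if m = j then X else 0) - (if m = i then X else 0))
     + ((if m = -j then Y else 0) - (if m = -i then Y else 0))"
proof -
  have ni: "-i \<in> qI N" and nj: "-j \<in> qI N"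
    using i j qI_uminus by auto
  define \<sigma>1 where "\<sigma>1 = super_sign i j k m"
  define \<sigma>2 where "\<sigma>2 = super_sign i j m l"
  define comm1 where "comm1 = (if k = j then rho i m x else 0)
        - smul \<sigma>1 (if i = m then rho k j x else 0)
        + (if k = - j then rho (- i) m x else 0)
        - smul \<sigma>1 (if - i = m then rho k (- j) x else 0)"
  define comm2 where "comm2 = (if m = j then G i l w else 0) - smul \<sigma>2 (if i = l then G m j w else 0)
        + (if m = -j then G (-i) l w else 0) - smul \<sigma>2 (if -i = l then G m (-j) w else 0)"
  have \<sigma>_prod: "\<sigma>1 * (sgnI m * \<sigma>2) = \<sigma> * sgnI m"
    using super_sign_mult[of i j k m l] unfolding \<sigma>1_def \<sigma>2_def \<sigma>_def by (simp add: algebra_simps)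
  have outer: "rho i j (rho k m x) = smul \<sigma>1 (rho k m (rho i j x)) + comm1"
    using rho_comm[OF i j k m, of x] unfolding \<sigma>1_def comm1_def by (simp add: algebra_simps)
  have inner: "rho i j x = smul (sgnI m * \<sigma>2) (G m l (rho i j w)) + smul (sgnI m) comm2"
  proof -
    have "rho i j (G m l w) = smul \<sigma>2 (G m l (rho i j w)) + comm2"
      using commutes_like_FD[OF G i j m l, of w] unfolding \<sigma>2_def comm2_def by (simp add: algebra_simps)
    then show ?thesis
      unfolding x_def by (simp add: rho_scale[OF i j] scale_right_distrib)
  qed
  have lhs: "rho i j (rho k m x) - smul \<sigma> (rho k m (smul (sgnI m) (G m l (rho i j w))))
      = comm1 + smul (\<sigma>1 * sgnI m) (rho k m comm2)"
    unfolding outer inner by (simp add: rho_add[OF k m] rho_scale[OF k m] scale_right_distrib \<sigma>_prod)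
  have tel_X: "smul (\<sigma>1 * sgnI m) (rho k m (if m = j then G i l w else 0)) - smul \<sigma>1 (if i = m then rho k j x else 0)
     = (if m = j then X else 0) - (if m = i then X else 0)"
    using sgnI_super_sign_swap[of j i k] unfolding X_def \<sigma>1_def x_def
    by (cases "m = j"; cases "m = i") (auto simp: rho_scale[OF k j] k m i ni mult.commute)
  have tel_Y: "smul (\<sigma>1 * sgnI m) (rho k m (if m = -j then G (-i) l w else 0)) - smul \<sigma>1 (if -i = m then rho k (-j) x else 0)
     = (if m = -j then Y else 0) - (if m = -i then Y else 0)"
    using sgnI_super_sign_swap_neg[of i j k] qI_nonzero[OF i] qI_nonzero[OF j] unfolding Y_def \<sigma>1_def x_def
    by (cases "m = -j"; cases "m = -i") (auto simp: rho_scale[OF k nj] k m i ni mult.commute)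
  have cancel_l: "smul (\<sigma>1 * sgnI m) (rho k m (smul \<sigma>2 (if i = l then G m j w else 0)))
     = (if i = l then smul \<sigma> (rho k m (smul (sgnI m) (G m j w))) else 0)"
    using \<sigma>_prod by (cases "i = l") (auto simp: rho_scale[OF k m] k m mult.commute mult.left_commute)
  have cancel_nl: "smul (\<sigma>1 * sgnI m) (rho k m (smul \<sigma>2 (if -i = l then G m (-j) w else 0)))
     = (if -i = l then smul \<sigma> (rho k m (smul (sgnI m) (G m (-j) w))) else 0)"
    using \<sigma>_prod by (cases "-i = l") (auto simp: rho_scale[OF k m] k m mult.commute mult.left_commute)
  have "comm1 + smul (\<sigma>1 * sgnI m) (rho k m comm2) = comm1
      + smul (\<sigma>1 * sgnI m) (rho k m (if m = j then G i l w else 0))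
      - smul (\<sigma>1 * sgnI m) (rho k m (smul \<sigma>2 (if i = l then G m j w else 0)))
      + smul (\<sigma>1 * sgnI m) (rho k m (if m = -j then G (-i) l w else 0))
      - smul (\<sigma>1 * sgnI m) (rho k m (smul \<sigma>2 (if -i = l then G m (-j) w else 0)))"
    unfolding comm2_def
    by (simp add: rho_add[OF k m] rho_diff[OF k m] scale_right_distrib scale_right_diff_distrib)
  also have "\<dots> = (if k = j then rho i m x else 0) + (if k = -j then rho (-i) m x else 0)
     - (if i = l then smul \<sigma> (rho k m (smul (sgnI m) (G m j w))) else 0)
     - (if -i = l then smul \<sigma> (rho k m (smul (sgnI m) (G m (-j) w))) else 0)
     + ((if m = j then X else 0) - (if m = i then X else 0))
     + ((if m = -j then Y else 0) - (if m = -i then Y else 0))"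
    unfolding comm1_def cancel_l[symmetric] cancel_nl[symmetric] tel_X[symmetric] tel_Y[symmetric]
    by (simp add: algebra_simps)
  finally show ?thesis
    using lhs by simp
qed

lemma commutes_like_F_contract:
  assumes G: "commutes_like_F G"
  shows "commutes_like_F (contract G)"
  unfolding commutes_like_F_def
proof (intro ballI allI)
  fix i j k l w assume i: "i \<in> qI N" and j: "j \<in> qI N" and k: "k \<in> qI N" and l: "l \<in> qI N"
  have ni: "-i \<in> qI N" and nj: "-j \<in> qI N"
    using i j qI_uminus by auto
  define \<sigma> where "\<sigma> = super_sign i j k l"
  define x where "x m = smul (sgnI m) (G m l w)" for m
  define X where "X = smul (sgnI i * super_sign i j k i) (rho k j (G i l w))"
  define Y where "Y = smul (sgnI (-i) * super_sign i j k (-i)) (rho k (-j) (G (-i) l w))"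
  have "rho i j (contract G k l w) - smul \<sigma> (contract G k l (rho i j w))
      = (\<Sum>m\<in>qI N. rho i j (rho k m (x m)) - smul \<sigma> (rho k m (smul (sgnI m) (G m l (rho i j w)))))"
    unfolding contract_def x_def by (simp add: rho_sum[OF i j] scale_sum_right sum_subtractf)
  also have "\<dots> = (\<Sum>m\<in>qI N. (if k = j then rho i m (x m) else 0) + (if k = -j then rho (-i) m (x m) else 0)
     - (if i = l then smul \<sigma> (rho k m (smul (sgnI m) (G m j w))) else 0)
     - (if -i = l then smul \<sigma> (rho k m (smul (sgnI m) (G m (-j) w))) else 0)
     + ((if m = j then X else 0) - (if m = i then X else 0))
     + ((if m = -j then Y else 0) - (if m = -i then Y else 0)))"
    unfolding \<sigma>_def x_def X_def Y_def
    by (rule sum.cong[OF refl], rule commutes_like_F_contract_summand[OF G i j k l])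
  also have "\<dots> = (if k = j then contract G i l w else 0) - smul \<sigma> (if i = l then contract G k j w else 0)
      + (if k = -j then contract G (-i) l w else 0) - smul \<sigma> (if -i = l then contract G k (-j) w else 0)"
    using i j ni nj
    by (simp add: sum.distrib sum_subtractf contract_def x_def scale_sum_right)
  finally show "rho i j (contract G k l w) - smul (super_sign i j k l) (contract G k l (rho i j w)) =
       (if k = j then contract G i l w else 0)
       - smul (super_sign i j k l) (if i = l then contract G k j w else 0)
       + (if k = - j then contract G (- i) l w else 0)
       - smul (super_sign i j k l) (if - i = l then contract G k (- j) w else 0)"
    unfolding \<sigma>_def .
qed

lemma commutes_like_F_C: "commutes_like_F (C n)"
proof (induction n rule: nat_less_induct)
  case (1 n)
  consider "n = 0" | "n = 1" | n' where "n = Suc (Suc n')"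
    by (metis One_nat_def not0_implies_Suc)
  then show ?case
  proof cases
    case 1
    then show ?thesis by (simp add: commutes_like_F_def)
  next
    case 2
    then show ?thesis using commutes_like_F_rho by (simp add: fun_eq_iff)
  next
    case 3
    then show ?thesis using "1.IH" by (simp add: C_Suc_Suc commutes_like_F_contract)
  qed
qed

lemma C_Suc_linear:
  "j \<in> qI N \<Longrightarrow> i \<in> qI N \<Longrightarrow>
    C (Suc n) i j (x + y) = C (Suc n) i j x + C (Suc n) i j y \<and> C (Suc n) i j (smul c x) = smul c (C (Suc n) i j x)"
proof (induction n arbitrary: i x y c)
  case 0
  then show ?case by (simp add: rho_add rho_scale)
next
  case (Suc n)
  have "C (Suc (Suc n)) i j (x + y) =
      (\<Sum>k\<in>qI N. rho i k (smul (sgnI k) (C (Suc n) k j x)) + rho i k (smul (sgnI k) (C (Suc n) k j y)))"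
    using Suc by (auto intro!: sum.cong simp: rho_add scale_right_distrib)
  moreover have "C (Suc (Suc n)) i j (smul c x) = (\<Sum>k\<in>qI N. smul c (rho i k (smul (sgnI k) (C (Suc n) k j x))))"
    using Suc by (auto intro!: sum.cong simp: rho_scale scale_left_commute[of c])
  ultimately show ?case by (simp add: sum.distrib scale_sum_right)
qed

lemma C_scale: "i \<in> qI N \<Longrightarrow> j \<in> qI N \<Longrightarrow> C n i j (smul c x) = smul c (C n i j x)"
  using C_Suc_linear by (cases n) auto

lemma additive_C: "i \<in> qI N \<Longrightarrow> j \<in> qI N \<Longrightarrow> additive (C n i j)"
  by standard (use C_Suc_linear in \<open>cases n; auto\<close>)

lemmas C_zero [simp] = additive.zero[OF additive_C]
  and C_minus = additive.minus[OF additive_C]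

lemma C_Suc_neg_neg:
  "i \<in> qI N \<Longrightarrow> j \<in> qI N \<Longrightarrow> C (Suc n) (-i) (-j) w = smul ((-1) ^ n) (C (Suc n) i j w)"
proof (induction n arbitrary: i)
  case 0
  then show ?case by (simp add: rho_neg_neg)
next
  case (Suc n)
  have "C (Suc (Suc n)) (-i) (-j) w = (\<Sum>k\<in>qI N. rho (-i) (-k) (smul (sgnI (-k)) (C (Suc n) (-k) (-j) w)))"
    by (simp only: Cact.simps) (rule sum_qI_reflect)
  also have "\<dots> = (\<Sum>k\<in>qI N. smul ((-1) ^ Suc n) (rho i k (smul (sgnI k) (C (Suc n) k j w))))"
  proof (rule sum.cong[OF refl])
    fix k assume k: "k \<in> qI N"
    have "sgnI (-k) = - sgnI k"
      using qI_nonzero[OF k] by (simp add: sgnI_eq)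
    then show "rho (-i) (-k) (smul (sgnI (-k)) (C (Suc n) (-k) (-j) w))
        = smul ((-1) ^ Suc n) (rho i k (smul (sgnI k) (C (Suc n) k j w)))"
      using Suc k by (simp add: rho_neg_neg rho_scale rho_minus mult.commute)
  qed
  finally show ?case by (simp add: scale_sum_right)
qed

lemma C_odd_neg_neg: "i \<in> qI N \<Longrightarrow> j \<in> qI N \<Longrightarrow> C (Suc (2 * m)) (-i) (-j) w = C (Suc (2 * m)) i j w"
  using C_Suc_neg_neg[of i j "2 * m"] by simp

lemma C_even_neg_neg:
  "i \<in> qI N \<Longrightarrow> j \<in> qI N \<Longrightarrow> C (Suc (Suc (2 * m))) (-i) (-j) w = - C (Suc (Suc (2 * m))) i j w"
  using C_Suc_neg_neg[of i j "Suc (2 * m)"] by simp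

lemma C_Suc_Suc_right:
  "k \<in> qI N \<Longrightarrow> l \<in> qI N \<Longrightarrow> C (Suc (Suc n)) k l w = (\<Sum>m\<in>qI N. C (Suc n) k m (smul (sgnI m) (rho m l w)))"
proof (induction n arbitrary: k)
  case 0
  then show ?case by simp
next
  case (Suc n)
  have "C (Suc (Suc (Suc n))) k l w =
      (\<Sum>a\<in>qI N. rho k a (smul (sgnI a) (\<Sum>m\<in>qI N. C (Suc n) a m (smul (sgnI m) (rho m l w)))))"
    using Suc by (simp only: Cact.simps) (auto intro!: sum.cong)
  also have "\<dots> = (\<Sum>a\<in>qI N. \<Sum>m\<in>qI N. rho k a (smul (sgnI a) (C (Suc n) a m (smul (sgnI m) (rho m l w)))))"
    using Suc by (auto intro!: sum.cong simp: scale_sum_right rho_sum)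
  also have "\<dots> = (\<Sum>m\<in>qI N. C (Suc (Suc n)) k m (smul (sgnI m) (rho m l w)))"
    by (subst sum.swap) simp
  finally show ?case .
qed

end

fun diag_coeff :: "nat \<Rightarrow> (int \<Rightarrow> complex) \<Rightarrow> nat \<Rightarrow> nat \<Rightarrow> complex" where
  "diag_coeff N lam 0 l = 1"
| "diag_coeff N lam (Suc m) l =
     lam (int l) * (lam (int l) - 1) * diag_coeff N lam m l - 2 * (\<Sum>p\<in>{l<..N}. lam (int p) * diag_coeff N lam m p)"

locale qN_highest_weight = qN_rep +
  fixes v and lam :: "int \<Rightarrow> complex"
  assumes rho_vanish: "\<And>i j. i \<in> qI N \<Longrightarrow> j \<in> qI N \<Longrightarrow> \<bar>i\<bar> < \<bar>j\<bar> \<Longrightarrow> rho i j v = 0"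
    and rho_diag: "\<And>i. i \<in> {1 .. int N} \<Longrightarrow> rho i i v = smul (lam i) v"
begin

lemma C_Suc_vanish: "k \<in> qI N \<Longrightarrow> l \<in> qI N \<Longrightarrow> \<bar>k\<bar> < \<bar>l\<bar> \<Longrightarrow> C (Suc n) k l v = 0"
proof (induction n arbitrary: k l)
  case 0
  then show ?case by (simp add: rho_vanish)
next
  case (Suc n)
  note k = Suc.prems(1) and l = Suc.prems(2) and kl = Suc.prems(3)
  have summand_zero: "C (Suc n) k m (smul (sgnI m) (rho m l v)) = 0" if m: "m \<in> qI N" for m
  proof (cases "\<bar>m\<bar> < \<bar>l\<bar>")
    case True
    then show ?thesis using rho_vanish[OF m l] k l m by simp
  next
    case False
    then have km: "\<bar>k\<bar> < \<bar>m\<bar>" using kl by linarith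
    have "k \<noteq> l" "k \<noteq> -l" "-m \<noteq> m"
      using kl qI_nonzero[OF m] by auto
    then have "smul (super_sign m l k m) (C (Suc n) k m (rho m l v)) = 0"
      using commutes_like_FD[OF commutes_like_F_C[of "Suc n"] m l k m, where w = v]
      using Suc.IH[OF k m km] Suc.IH[OF k l kl] k l m by simp
    then show ?thesis
      using k m by (simp add: C_scale super_sign_def)
  qed
  then show ?case
    unfolding C_Suc_Suc_right[OF k l] by simp
qed

lemma C_vanish: "k \<in> qI N \<Longrightarrow> l \<in> qI N \<Longrightarrow> \<bar>k\<bar> < \<bar>l\<bar> \<Longrightarrow> C n k l v = 0"
  using C_Suc_vanish by (cases n) auto

text \<open>Since C_Lq kills v, the supercommutator of F_qL (resp. F_{q,-L}) with C_Lq
  leaves only the two diagonal terms.\<close>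

lemma C_rho_lowering:
  assumes L: "L \<in> qI N" and q: "q \<in> qI N" and lt: "\<bar>L\<bar> < \<bar>q\<bar>"
  shows "C n L q (rho q L v) = C n L L v - smul (super_sign q L L q) (C n q q v)"
proof -
  have "L \<noteq> -L" "-q \<noteq> q"
    using qI_nonzero[OF L] qI_nonzero[OF q] by auto
  then have "smul (super_sign q L L q) (C n L q (rho q L v)) = smul (super_sign q L L q) (C n L L v) - C n q q v"
    using commutes_like_FD[OF commutes_like_F_C[of n] q L L q, where w = v] C_vanish[OF L q lt] q L
    by (simp add: algebra_simps)
  then have "smul (super_sign q L L q) (smul (super_sign q L L q) (C n L q (rho q L v)))
      = smul (super_sign q L L q) (smul (super_sign q L L q) (C n L L v) - C n q q v)"
    by simp
  then show ?thesis
    by (simp only: scale_super_sign_twice scale_right_diff_distrib)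
qed

lemma C_rho_lowering_neg:
  assumes L: "L \<in> qI N" and q: "q \<in> qI N" and lt: "\<bar>L\<bar> < \<bar>q\<bar>"
  shows "C n L q (rho q (-L) v) = C n L (-L) v - smul (super_sign q (-L) L q) (C n (-q) q v)"
proof -
  have nL: "-L \<in> qI N" using qI_uminus[OF L] .
  have "L \<noteq> -L" "-q \<noteq> q"
    using qI_nonzero[OF L] qI_nonzero[OF q] by auto
  then have "smul (super_sign q (-L) L q) (C n L q (rho q (-L) v))
      = smul (super_sign q (-L) L q) (C n L (-L) v) - C n (-q) q v"
    using commutes_like_FD[OF commutes_like_F_C[of n] q nL L q, where w = v] C_vanish[OF L q lt] q L nL
    by (simp add: algebra_simps)
  then have "smul (super_sign q (-L) L q) (smul (super_sign q (-L) L q) (C n L q (rho q (-L) v)))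
      = smul (super_sign q (-L) L q) (smul (super_sign q (-L) L q) (C n L (-L) v) - C n (-q) q v)"
    by simp
  then show ?thesis
    by (simp only: scale_super_sign_twice scale_right_diff_distrib)
qed

text \<open>In C^(n+2)_ll v = sum_p C^(n+1)_lp (-1)^(bar p) F_pl v only |p| \<ge> l survive, and for
  |p| > l the operator F_pl is moved to the left by C_rho_lowering.\<close>

lemma C_diag_recursion:
  assumes l: "l \<in> {1..N}"
  shows "C (Suc (Suc n)) (int l) (int l) v = smul (lam (int l)) (C (Suc n) (int l) (int l) v)
     - C (Suc n) (int l) (- int l) (rho (- int l) (int l) v)
     - (\<Sum>p\<in>{l<..N}. C (Suc n) (int p) (int p) v + C (Suc n) (- int p) (- int p) v)"
proof -
  note L = int_in_qI(1)[OF l] and nL = int_in_qI(2)[OF l]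
  have "C (Suc (Suc n)) (int l) (int l) v =
      (\<Sum>p\<in>{1..N}. C (Suc n) (int l) (int p) (rho (int p) (int l) v) - C (Suc n) (int l) (- int p) (rho (- int p) (int l) v))"
    unfolding C_Suc_Suc_right[OF L L] sum_qI
    by (rule sum.cong[OF refl]) (use int_in_qI L in \<open>simp add: sgnI_eq C_minus\<close>)
  also have "\<dots> = (smul (lam (int l)) (C (Suc n) (int l) (int l) v) - C (Suc n) (int l) (- int l) (rho (- int l) (int l) v))
     + (\<Sum>p\<in>{l<..N}. - (C (Suc n) (int p) (int p) v + C (Suc n) (- int p) (- int p) v))"
  proof (rule sum_atLeastAtMost_split_at[OF l])
    fix p assume p: "p \<in> {1..N}"
    note P = int_in_qI(1)[OF p] and nP = int_in_qI(2)[OF p]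
    consider "p < l" | "p = l" | "l < p" by linarith
    then show "C (Suc n) (int l) (int p) (rho (int p) (int l) v) - C (Suc n) (int l) (- int p) (rho (- int p) (int l) v) =
      (if p = l then smul (lam (int l)) (C (Suc n) (int l) (int l) v) - C (Suc n) (int l) (- int l) (rho (- int l) (int l) v) else 0) +
      (if l < p then - (C (Suc n) (int p) (int p) v + C (Suc n) (- int p) (- int p) v) else 0)"
    proof cases
      case 1
      then show ?thesis using rho_vanish[OF P L] rho_vanish[OF nP L] L P nP by simp
    next
      case 2
      then show ?thesis using rho_diag[of "int l"] l L by (simp add: C_scale)
    next
      case 3
      then show ?thesis
        using C_rho_lowering[OF L P] C_rho_lowering[OF L nP] l by (simp add: super_sign_def pbar_def)
    qed
  qed
  finally show ?thesis
    by (simp only: sum_negf) simp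
qed

lemma C_offdiag_recursion:
  assumes l: "l \<in> {1..N}"
  shows "C (Suc (Suc n)) (int l) (- int l) v = C (Suc n) (int l) (int l) (rho (- int l) (int l) v)
     - smul (lam (int l)) (C (Suc n) (int l) (- int l) v)
     + (\<Sum>p\<in>{l<..N}. C (Suc n) (int p) (- int p) v - C (Suc n) (- int p) (int p) v)"
proof -
  note L = int_in_qI(1)[OF l] and nL = int_in_qI(2)[OF l]
  have "C (Suc (Suc n)) (int l) (- int l) v = (\<Sum>p\<in>{1..N}.
      C (Suc n) (int l) (int p) (rho (int p) (- int l) v) - C (Suc n) (int l) (- int p) (rho (- int p) (- int l) v))"
    unfolding C_Suc_Suc_right[OF L nL] sum_qI
    by (rule sum.cong[OF refl]) (use int_in_qI L in \<open>simp add: sgnI_eq C_minus\<close>)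
  also have "\<dots> = (C (Suc n) (int l) (int l) (rho (- int l) (int l) v) - smul (lam (int l)) (C (Suc n) (int l) (- int l) v))
     + (\<Sum>p\<in>{l<..N}. C (Suc n) (int p) (- int p) v - C (Suc n) (- int p) (int p) v)"
  proof (rule sum_atLeastAtMost_split_at[OF l])
    fix p assume p: "p \<in> {1..N}"
    note P = int_in_qI(1)[OF p] and nP = int_in_qI(2)[OF p]
    consider "p < l" | "p = l" | "l < p" by linarith
    then show "C (Suc n) (int l) (int p) (rho (int p) (- int l) v) - C (Suc n) (int l) (- int p) (rho (- int p) (- int l) v) =
      (if p = l then C (Suc n) (int l) (int l) (rho (- int l) (int l) v) - smul (lam (int l)) (C (Suc n) (int l) (- int l) v) else 0) +
      (if l < p then C (Suc n) (int p) (- int p) v - C (Suc n) (- int p) (int p) v else 0)"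
    proof cases
      case 1
      then show ?thesis using rho_vanish[OF P nL] rho_vanish[OF nP nL] L P nP by simp
    next
      case 2
      then show ?thesis
        using rho_diag[of "int l"] l L nL rho_neg_neg[OF nL L] rho_neg_neg[OF L L] by (simp add: C_scale)
    next
      case 3
      then show ?thesis
        using C_rho_lowering_neg[OF L P] C_rho_lowering_neg[OF L nP] l by (simp add: super_sign_def pbar_def)
    qed
  qed
  finally show ?thesis by simp
qed

lemma rho_flip_twice:
  assumes l: "l \<in> {1..N}"
  shows "rho (- int l) (int l) (rho (- int l) (int l) v) = smul (lam (int l)) v"
proof -
  note L = int_in_qI(1)[OF l] and nL = int_in_qI(2)[OF l]
  have "super_sign (int l) (- int l) (int l) (- int l) = -1"
    using l by (simp add: super_sign_def pbar_def)
  then have "rho (- int l) (int l) (rho (- int l) (int l) v) + rho (- int l) (int l) (rho (- int l) (int l) v)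
     = smul (lam (int l)) v + smul (lam (int l)) v"
    using rho_comm[OF L nL L nL, of v] l rho_diag[of "int l"] rho_neg_neg[OF nL L] rho_neg_neg[OF L L] by simp
  then have "smul 2 (rho (- int l) (int l) (rho (- int l) (int l) v)) = smul 2 (smul (lam (int l)) v)"
    by (metis one_add_one scale_left_distrib scale_one)
  then show ?thesis
    using scale_cancel_left[of 2 "rho (- int l) (int l) (rho (- int l) (int l) v)" "smul (lam (int l)) v"]
    by simp
qed

lemma C_offdiag_flip:
  assumes l: "l \<in> {1..N}"
  shows "C n (int l) (- int l) (rho (- int l) (int l) v)
    = C n (- int l) (- int l) v + C n (int l) (int l) v - rho (- int l) (int l) (C n (int l) (- int l) v)"
proof -
  note L = int_in_qI(1)[OF l] and nL = int_in_qI(2)[OF l]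
  have "super_sign (- int l) (int l) (int l) (- int l) = -1"
    using l by (simp add: super_sign_def pbar_def)
  then show ?thesis
    using commutes_like_FD[OF commutes_like_F_C[of n] nL L L nL, where w = v] l by (simp add: algebra_simps)
qed

lemma C_diag_flip:
  assumes l: "l \<in> {1..N}"
  shows "C n (int l) (int l) (rho (- int l) (int l) v)
    = rho (- int l) (int l) (C n (int l) (int l) v) + C n (int l) (- int l) v - C n (- int l) (int l) v"
proof -
  note L = int_in_qI(1)[OF l] and nL = int_in_qI(2)[OF l]
  have "super_sign (int l) (- int l) (int l) (int l) = 1"
    using l by (simp add: super_sign_def pbar_def)
  then show ?thesis
    using commutes_like_FD[OF commutes_like_F_C[of n] L nL L L, where w = v] l rho_neg_neg[OF nL L]
    by (simp add: algebra_simps)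
qed

definition odd_level_formula :: "nat \<Rightarrow> bool" where
  "odd_level_formula m \<longleftrightarrow> (\<forall>p\<in>{1..N}.
     C (Suc (2 * m)) (int p) (int p) v = smul (lam (int p) * diag_coeff N lam m p) v \<and>
     C (Suc (2 * m)) (int p) (- int p) v = smul (diag_coeff N lam m p) (rho (- int p) (int p) v))"

definition even_level_formula :: "nat \<Rightarrow> bool" where
  "even_level_formula m \<longleftrightarrow> (\<forall>p\<in>{1..N}.
     C (Suc (Suc (2 * m))) (int p) (int p) v = smul (diag_coeff N lam (Suc m) p) v \<and>
     C (Suc (Suc (2 * m))) (int p) (- int p) v = 0)"

lemma odd_level_formula_0: "odd_level_formula 0"
  unfolding odd_level_formula_def
  using rho_diag rho_neg_neg[OF int_in_qI(2) int_in_qI(1)] by simp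

lemma C_even_diag:
  assumes odd: "odd_level_formula m" and l: "l \<in> {1..N}"
  shows "C (Suc (Suc (2 * m))) (int l) (int l) v = smul (diag_coeff N lam (Suc m) l) v"
proof -
  note L = int_in_qI(1)[OF l] and nL = int_in_qI(2)[OF l]
  define b where "b = diag_coeff N lam m"
  have diag: "C (Suc (2 * m)) (int p) (int p) v = smul (lam (int p) * b p) v"
    and offdiag: "C (Suc (2 * m)) (int p) (- int p) v = smul (b p) (rho (- int p) (int p) v)"
    if "p \<in> {1..N}" for p
    using odd that unfolding odd_level_formula_def b_def by auto
  have flip: "C (Suc (2 * m)) (int l) (- int l) (rho (- int l) (int l) v) = smul (lam (int l) * b l) v"
  proof -
    have "rho (- int l) (int l) (C (Suc (2 * m)) (int l) (- int l) v) = smul (lam (int l) * b l) v"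
      unfolding offdiag[OF l] rho_scale[OF nL L] rho_flip_twice[OF l] scale_scale by (simp add: mult.commute)
    then show ?thesis
      unfolding C_offdiag_flip[OF l] C_odd_neg_neg[OF L L] diag[OF l] by simp
  qed
  have tail: "(\<Sum>p\<in>{l<..N}. C (Suc (2 * m)) (int p) (int p) v + C (Suc (2 * m)) (- int p) (- int p) v)
      = smul (2 * (\<Sum>p\<in>{l<..N}. lam (int p) * b p)) v"
  proof -
    have "C (Suc (2 * m)) (int p) (int p) v + C (Suc (2 * m)) (- int p) (- int p) v = smul (2 * (lam (int p) * b p)) v"
      if "p \<in> {l<..N}" for p
    proof -
      have p: "p \<in> {1..N}" using that l by auto
      show ?thesis
        by (simp only: C_odd_neg_neg[OF int_in_qI(1)[OF p] int_in_qI(1)[OF p]] diag[OF p]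
            scale_left_distrib[symmetric] mult_2[symmetric])
    qed
    then show ?thesis
      by (simp add: scale_sum_left sum_distrib_left)
  qed
  have "C (Suc (Suc (2 * m))) (int l) (int l) v = smul (lam (int l)) (smul (lam (int l) * b l) v)
     - smul (lam (int l) * b l) v - smul (2 * (\<Sum>p\<in>{l<..N}. lam (int p) * b p)) v"
    by (simp only: C_diag_recursion[OF l] diag[OF l] flip tail)
  also have "\<dots> = smul (lam (int l) * (lam (int l) * b l) - lam (int l) * b l - 2 * (\<Sum>p\<in>{l<..N}. lam (int p) * b p)) v"
    by (simp only: scale_left_diff_distrib scale_scale)
  also have "\<dots> = smul (diag_coeff N lam (Suc m) l) v"
    by (simp add: b_def algebra_simps)
  finally show ?thesis .
qed

lemma C_even_offdiag:
  assumes odd: "odd_level_formula m" and l: "l \<in> {1..N}"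
  shows "C (Suc (Suc (2 * m))) (int l) (- int l) v = 0"
proof -
  note L = int_in_qI(1)[OF l] and nL = int_in_qI(2)[OF l]
  define b where "b = diag_coeff N lam m"
  have diag: "C (Suc (2 * m)) (int p) (int p) v = smul (lam (int p) * b p) v"
    and offdiag: "C (Suc (2 * m)) (int p) (- int p) v = smul (b p) (rho (- int p) (int p) v)"
    if "p \<in> {1..N}" for p
    using odd that unfolding odd_level_formula_def b_def by auto
  have offdiag_sym: "C (Suc (2 * m)) (- int p) (int p) v = C (Suc (2 * m)) (int p) (- int p) v"
    if "p \<in> {1..N}" for p
    using C_odd_neg_neg[OF int_in_qI(1)[OF that] int_in_qI(2)[OF that]] by simp
  have flip: "C (Suc (2 * m)) (int l) (int l) (rho (- int l) (int l) v) = smul (lam (int l) * b l) (rho (- int l) (int l) v)"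
    using C_diag_flip[OF l] diag[OF l] offdiag_sym[OF l] by (simp add: rho_scale[OF nL L])
  have tail: "(\<Sum>p\<in>{l<..N}. C (Suc (2 * m)) (int p) (- int p) v - C (Suc (2 * m)) (- int p) (int p) v) = 0"
    by (rule sum.neutral) (use offdiag_sym l in auto)
  show ?thesis
    using C_offdiag_recursion[OF l] flip tail offdiag[OF l] by (simp add: mult.commute)
qed

lemma even_level_formula_if_odd: "odd_level_formula m \<Longrightarrow> even_level_formula m"
  unfolding even_level_formula_def using C_even_diag C_even_offdiag by blast

lemma odd_level_formula_Suc_if_even:
  assumes even: "even_level_formula m"
  shows "odd_level_formula (Suc m)"
  unfolding odd_level_formula_def
proof (intro ballI conjI)
  fix l assume l: "l \<in> {1..N}"
  note L = int_in_qI(1)[OF l] and nL = int_in_qI(2)[OF l]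
  define n where "n = Suc (2 * m)"
  define b' where "b' = diag_coeff N lam (Suc m)"
  have n_Suc: "Suc (2 * Suc m) = Suc (Suc n)"
    unfolding n_def by simp
  have diag: "C (Suc n) (int p) (int p) v = smul (b' p) v"
    and offdiag: "C (Suc n) (int p) (- int p) v = 0"
    if "p \<in> {1..N}" for p
    using even that unfolding even_level_formula_def n_def b'_def by auto
  have diag_neg: "C (Suc n) (- int p) (- int p) v = - C (Suc n) (int p) (int p) v"
    and offdiag_neg: "C (Suc n) (- int p) (int p) v = 0"
    if "p \<in> {1..N}" for p
    using C_even_neg_neg[OF int_in_qI(1)[OF that] int_in_qI(1)[OF that]]
      C_even_neg_neg[OF int_in_qI(1)[OF that] int_in_qI(2)[OF that]] offdiag[OF that]
    unfolding n_def by auto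
  have diag_sum: "(\<Sum>p\<in>{l<..N}. C (Suc n) (int p) (int p) v + C (Suc n) (- int p) (- int p) v) = 0"
    and offdiag_sum: "(\<Sum>p\<in>{l<..N}. C (Suc n) (int p) (- int p) v - C (Suc n) (- int p) (int p) v) = 0"
    using diag_neg offdiag offdiag_neg l by (auto intro!: sum.neutral)
  have "C (Suc n) (int l) (- int l) (rho (- int l) (int l) v) = 0"
    using C_offdiag_flip[OF l, of "Suc n"] offdiag[OF l] diag_neg[OF l] nL L by simp
  then show "C (Suc (2 * Suc m)) (int l) (int l) v = smul (lam (int l) * diag_coeff N lam (Suc m) l) v"
    unfolding n_Suc C_diag_recursion[OF l] diag_sum diag[OF l] b'_def by simp
  have "C (Suc n) (int l) (int l) (rho (- int l) (int l) v) = smul (b' l) (rho (- int l) (int l) v)"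
    using C_diag_flip[OF l, of "Suc n"] diag[OF l] offdiag[OF l] offdiag_neg[OF l]
    by (simp add: rho_scale[OF nL L])
  then show "C (Suc (2 * Suc m)) (int l) (- int l) v = smul (diag_coeff N lam (Suc m) l) (rho (- int l) (int l) v)"
    unfolding n_Suc C_offdiag_recursion[OF l] offdiag_sum offdiag[OF l] b'_def by simp
qed

lemma odd_level_formula: "odd_level_formula m"
  by (induction m) (simp_all add: odd_level_formula_0 odd_level_formula_Suc_if_even even_level_formula_if_odd)

end

lemma pow_mat_Suc_left:
  assumes "A \<in> carrier_mat n n"
  shows "A ^\<^sub>m Suc k = A * A ^\<^sub>m k"
proof (induction k)
  case 0
  then show ?case using assms by simp
next
  case (Suc k)
  have "A ^\<^sub>m Suc (Suc k) = (A * A ^\<^sub>m k) * A"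
    using Suc by simp
  also have "\<dots> = A * (A ^\<^sub>m k * A)"
    using assms by (simp add: assoc_mult_mat[of _ n n _ n _ n])
  finally show ?case by simp
qed

lemma Amat_carrier: "Amat N lam \<in> carrier_mat N N"
  unfolding Amat_def by simp

lemma mult_mat_vec_vec_index:
  assumes "A \<in> carrier_mat n n" and "a < n"
  shows "(A *\<^sub>v vec n f) $ a = (\<Sum>t<n. A $$ (a, t) * f t)"
  using assms by (auto simp: scalar_prod_def lessThan_atLeast0 intro!: sum.cong)

lemma Amat_mult_vec:
  "Amat N lam *\<^sub>v vec N f =
    vec N (\<lambda>a. lam (int a + 1) * ((lam (int a + 1) - 1) * f a - 2 * (\<Sum>t\<in>{a<..<N}. f t)))"
  (is "_ = ?rhs")
proof (rule eq_vecI)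
  fix a assume "a < dim_vec ?rhs"
  then have a: "a < N" by simp
  have "(Amat N lam *\<^sub>v vec N f) $ a = (\<Sum>t<N. (if t = a then lam (int a + 1) * (lam (int a + 1) - 1) * f a else 0)
      + (if a < t then -2 * lam (int a + 1) * f t else 0))"
    using a by (simp add: mult_mat_vec_vec_index[OF Amat_carrier]) (auto simp: Amat_def Let_def intro!: sum.cong)
  also have "\<dots> = lam (int a + 1) * (lam (int a + 1) - 1) * f a + (\<Sum>t\<in>{a<..<N}. -2 * lam (int a + 1) * f t)"
  proof -
    have "{t\<in>{..<N}. a < t} = {a<..<N}" by auto
    then show ?thesis
      using a by (simp add: sum.distrib sum.inter_filter[symmetric])
  qed
  also have "(\<Sum>t\<in>{a<..<N}. -2 * lam (int a + 1) * f t) = -2 * lam (int a + 1) * (\<Sum>t\<in>{a<..<N}. f t)"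
    by (simp add: sum_distrib_left)
  finally show "(Amat N lam *\<^sub>v vec N f) $ a = ?rhs $ a"
    using a by (simp add: algebra_simps)
qed (use Amat_carrier[of N lam] in simp)

lemma Amat_pow_mult_vec:
  "(Amat N lam ^\<^sub>m m) *\<^sub>v vec N (\<lambda>j. lam (int j + 1)) = vec N (\<lambda>a. lam (int a + 1) * diag_coeff N lam m (Suc a))"
proof (induction m)
  case 0
  then show ?case using Amat_carrier[of N lam] by simp
next
  case (Suc m)
  define b where "b = diag_coeff N lam m"
  have shift: "(\<Sum>t\<in>{a<..<N}. lam (int t + 1) * b (Suc t)) = (\<Sum>p\<in>{Suc a<..N}. lam (int p) * b p)" for a
  proof -
    have "{Suc a<..N} = Suc ` {a<..<N}"
    proof (intro equalityI subsetI)
      fix x assume "x \<in> {Suc a<..N}"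
      then show "x \<in> Suc ` {a<..<N}" by (intro image_eqI[of _ _ "x - 1"]) auto
    qed auto
    then show ?thesis by (simp add: sum.reindex add.commute)
  qed
  have "(Amat N lam ^\<^sub>m Suc m) *\<^sub>v vec N (\<lambda>j. lam (int j + 1))
      = Amat N lam *\<^sub>v vec N (\<lambda>a. lam (int a + 1) * b (Suc a))"
    unfolding pow_mat_Suc_left[OF Amat_carrier]
    by (subst assoc_mult_mat_vec[of _ N N _ N]) (simp_all add: Amat_carrier Suc b_def)
  also have "\<dots> = vec N (\<lambda>a. lam (int a + 1) * diag_coeff N lam (Suc m) (Suc a))"
    unfolding Amat_mult_vec shift by (simp add: b_def algebra_simps)
  finally show ?case .
qed

theorem mainTheorem10:
  fixes N :: nat
    and smul :: "complex \<Rightarrow> 'v::ab_group_add \<Rightarrow> 'v"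
    and rho :: "int \<Rightarrow> int \<Rightarrow> 'v \<Rightarrow> 'v"
    and v :: 'v
    and lam :: "int \<Rightarrow> complex"
  assumes "N \<ge> 1"
    and "is_qN_rep N smul rho"
    and "\<And>i j. i \<in> qI N \<Longrightarrow> j \<in> qI N \<Longrightarrow> \<bar>i\<bar> < \<bar>j\<bar> \<Longrightarrow> rho i j v = 0"
    and "\<And>i. i \<in> {1 .. int N} \<Longrightarrow> rho i i v = smul (lam i) v"
  shows "\<forall>m::nat. \<forall>i\<in>{1 .. N}.
           Cact N smul rho (2 * m + 1) (int i) (int i) v =
           smul (\<Sum>j\<in>{1 .. N}. (Amat N lam ^\<^sub>m m) $$ (i - 1, j - 1) * lam (int j)) v"
proof (intro allI ballI)
  fix m i assume i: "i \<in> {1..N}"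
  interpret qN_highest_weight smul N rho v lam
    using assms(2-4)
    unfolding qN_highest_weight_def qN_highest_weight_axioms_def qN_rep_def qN_rep_axioms_def
      is_qN_rep_def Vector_Spaces.linear_iff
    by (auto simp: super_sign_def Let_def)
  have "(\<Sum>j\<in>{1..N}. (Amat N lam ^\<^sub>m m) $$ (i - 1, j - 1) * lam (int j))
      = ((Amat N lam ^\<^sub>m m) *\<^sub>v vec N (\<lambda>j. lam (int j + 1))) $ (i - 1)"
    using i by (subst mult_mat_vec_vec_index[OF pow_carrier_mat[OF Amat_carrier]])
      (auto simp: sum.atLeast1_atMost_eq add.commute)
  also have "\<dots> = lam (int i) * diag_coeff N lam m i"
  proof -
    have "i - 1 < N" "Suc (i - 1) = i" "int (i - 1) + 1 = int i"
      using i by auto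
    then show ?thesis
      by (simp add: Amat_pow_mult_vec)
  qed
  finally show "Cact N smul rho (2 * m + 1) (int i) (int i) v =
      smul (\<Sum>j\<in>{1..N}. (Amat N lam ^\<^sub>m m) $$ (i - 1, j - 1) * lam (int j)) v"
    using odd_level_formula[of m] i unfolding odd_level_formula_def by simp
qed

end
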